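(* Let $\mathbb{F}_q$ be any finite field and let $\mathcal{Q}=\mathbb{F}_q^3$ with the relation: $(x_1,y_1,z_1)$ and $(x_2,y_2,z_2)$ commute iff $x_1y_2-y_1x_2=z_1-z_2$. Then there exist two lines $L_1,L_2$ in $\mathbb{F}_q^3$ such that $L_1\cup L_2$ is a non-commuting subset of $\mathcal{Q}$ of cardinality $2q$ which is not contained in any strictly larger non-commuting subset of $\mathcal{Q}$.
   Context: A line in $\mathbb{F}_q^3$ is a set $\{p+tv: t\in\mathbb{F}_q\}$ with $p\in\mathbb{F}_q^3$, $v\in\mathbb{F}_q^3\setminus\{0\}$. A subset of $\mathcal{Q}$ is non-commuting if no two distinct elements of it commute. *)

theory Defs
  imports Main
begin

type_synonym 'a pt3 = "'a \<times> 'a \<times> 'a"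

definition line3 :: "'a::field pt3 \<Rightarrow> 'a pt3 \<Rightarrow> 'a pt3 set" where
  "line3 p v = (case p of (p1, p2, p3) \<Rightarrow> case v of (v1, v2, v3) \<Rightarrow>
     {(p1 + t * v1, p2 + t * v2, p3 + t * v3) | t. True})"

definition is_line3 :: "'a::field pt3 set \<Rightarrow> bool" where
  "is_line3 L \<longleftrightarrow> (\<exists>p v. v \<noteq> (0, 0, 0) \<and> L = line3 p v)"

definition commutes :: "'a::field pt3 \<Rightarrow> 'a pt3 \<Rightarrow> bool" where
  "commutes a b = (case a of (x1, y1, z1) \<Rightarrow> case b of (x2, y2, z2) \<Rightarrow>
     x1 * y2 - y1 * x2 = z1 - z2)"

definition noncommuting :: "'a::field pt3 set \<Rightarrow> bool" where
  "noncommuting S \<longleftrightarrow> (\<forall>a\<in>S. \<forall>b\<in>S. a \<noteq> b \<longrightarrow> \<not> commutes a b)"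

end

theory Submission
  imports Defs
begin

text \<open>Take the lines \<open>L\<^sub>1 = {(t,0,t)}\<close> and \<open>L\<^sub>2 = {(t,1,1)}\<close>. Two points of \<open>L\<^sub>1\<close> (or of \<open>L\<^sub>2\<close>) commute
  only if \<open>t\<^sub>1 = t\<^sub>2\<close>, and \<open>(t,0,t)\<close> never commutes with \<open>(s,1,1)\<close> since that would force \<open>t = t - 1\<close>.
  Since every point commutes with itself, maximality means that every \<open>(x,y,z)\<close> commutes with some
  point of \<open>L\<^sub>1 \<union> L\<^sub>2\<close>: with \<open>(x - z + 1,1,1)\<close> if \<open>y = 1\<close>, and with \<open>(t,0,t)\<close>, \<open>t = z/(1 - y)\<close>, otherwise.\<close>

lemma line3_eq_range:
  "line3 (p1, p2, p3) (v1, v2, v3) = range (\<lambda>t. (p1 + t * v1, p2 + t * v2, p3 + t * v3))"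
  by (auto simp: line3_def)

lemma is_line3_line3: "v \<noteq> (0, 0, 0) \<Longrightarrow> is_line3 (line3 p v)"
  unfolding is_line3_def by blast

lemma card_line3:
  fixes p v :: "'a::{finite, field} pt3"
  assumes "v \<noteq> (0, 0, 0)"
  shows "card (line3 p v) = card (UNIV :: 'a set)"
proof -
  obtain p1 p2 p3 v1 v2 v3 where p: "p = (p1, p2, p3)" and v: "v = (v1, v2, v3)"
    by (cases p, cases v) auto
  have "inj (\<lambda>t. (p1 + t * v1, p2 + t * v2, p3 + t * v3))"
    using assms by (auto simp: inj_def v)
  then show ?thesis
    by (simp add: p v line3_eq_range card_image)
qed

lemma noncommuting_superset_eq:
  assumes "noncommuting S" and "T \<subseteq> S" and "\<And>a. \<exists>b\<in>T. commutes a b"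
  shows "S = T"
proof
  show "S \<subseteq> T"
  proof
    fix a assume "a \<in> S"
    obtain b where "b \<in> T" and "commutes a b" using assms(3) by blast
    then have "a = b" using \<open>a \<in> S\<close> assms(1,2) unfolding noncommuting_def by blast
    then show "a \<in> T" using \<open>b \<in> T\<close> by simp
  qed
qed (rule assms(2))

lemma noncommuting_line_pair:
  "noncommuting (line3 (0, 0, 0) (1, 0, 1) \<union> line3 (0, 1, 1) (1, 0, 0) :: 'a::field pt3 set)"
  by (auto simp: noncommuting_def commutes_def line3_eq_range algebra_simps)

lemma commutes_with_line_pair:
  fixes a :: "'a::field pt3"
  shows "\<exists>b \<in> line3 (0, 0, 0) (1, 0, 1) \<union> line3 (0, 1, 1) (1, 0, 0). commutes a b"
proof -
  obtain x y z where a: "a = (x, y, z)" by (cases a) auto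
  show ?thesis
  proof (cases "y = 1")
    case True
    have "commutes a (x - z + 1, 1, 1)"
      using True by (simp add: a commutes_def algebra_simps)
    moreover have "(x - z + 1, 1, 1) \<in> line3 (0, 1, 1) (1, 0, 0)"
      by (simp add: line3_eq_range)
    ultimately show ?thesis by blast
  next
    case False
    define t where "t = z / (1 - y)"
    have "t * (1 - y) = z" using False by (simp add: t_def)
    then have "commutes a (t, 0, t)"
      by (simp add: a commutes_def algebra_simps)
    moreover have "(t, 0, t) \<in> line3 (0, 0, 0) (1, 0, 1)"
      by (simp add: line3_eq_range)
    ultimately show ?thesis by blast
  qed
qed

theorem lemma7p3:
  shows "\<exists>L1 L2 :: ('a::{finite, field}) pt3 set.
           is_line3 L1 \<and> is_line3 L2 \<and>
           noncommuting (L1 \<union> L2) \<and>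
           card (L1 \<union> L2) = 2 * card (UNIV :: 'a set) \<and>
           (\<forall>S. noncommuting S \<and> L1 \<union> L2 \<subseteq> S \<longrightarrow> S = L1 \<union> L2)"
proof -
  define L1 :: "'a pt3 set" where "L1 = line3 (0, 0, 0) (1, 0, 1)"
  define L2 :: "'a pt3 set" where "L2 = line3 (0, 1, 1) (1, 0, 0)"
  have "L1 \<inter> L2 = {}"
    by (auto simp: L1_def L2_def line3_eq_range)
  then have "card (L1 \<union> L2) = 2 * card (UNIV :: 'a set)"
    by (simp add: card_Un_disjoint L1_def L2_def card_line3)
  moreover have "is_line3 L1" "is_line3 L2"
    by (simp_all add: L1_def L2_def is_line3_line3)
  moreover have "noncommuting (L1 \<union> L2)"
    unfolding L1_def L2_def by (rule noncommuting_line_pair)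
  moreover have "\<forall>S. noncommuting S \<and> L1 \<union> L2 \<subseteq> S \<longrightarrow> S = L1 \<union> L2"
    using noncommuting_superset_eq commutes_with_line_pair unfolding L1_def L2_def by blast
  ultimately show ?thesis by blast
qed

end
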